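(* Let $p\ge1$ and $\mathbf{y}\in\mathbb{R}^p$ with $s=\|\mathbf{y}\|^2>p+2$. For $\tau^2>0$ put $\kappa=1/(1+\tau^2)$ and $w(\tau^2)=(1-\kappa)^2 s+(1-\kappa)p$, and define the EM update map $M(\tau^2)=\arg\min_{t>0}\left\{\frac p2\log t+\frac{w(\tau^2)}{2t}+\log(1+t)\right\}$. Then $\tau^{2}_\ast=(1-\kappa_\ast)/\kappa_\ast$ with $\kappa_\ast=(p+2)/s$ is a fixed point of $M$, i.e. $M(\tau^2_\ast)=\tau^2_\ast$. Moreover, the corresponding posterior-mean estimator $\hat{\boldsymbol\beta}=(1-\kappa_\ast)\mathbf{y}=\left(1-\frac{p+2}{\|\mathbf{y}\|^2}\right)\mathbf{y}$ is, as an estimator of $\boldsymbol\beta$ under the model $\mathbf{y}\sim N_p(\boldsymbol\beta,\mathbf{I}_p)$ with squared-error loss, minimax (in particular it dominates the least-squares estimator $\mathbf{y}$) whenever $p\ge6$.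
   Context: Normal multiple means model with known unit variance: $y_i\mid\beta_i\sim N(\beta_i,1)$ independently, $\boldsymbol\beta\mid\tau\sim N_p(\mathbf{0},\tau^2\mathbf{I}_p)$, $\tau$ has a standard half-Cauchy prior. The conditional posterior is $\boldsymbol\beta\mid\mathbf{y},\tau\sim N((1-\kappa)\mathbf{y},(1-\kappa)\mathbf{I}_p)$ with $\kappa=1/(1+\tau^2)$, so $w(\tau^2)=\mathbb{E}[\|\boldsymbol\beta\|^2\mid\mathbf{y},\tau]$, and $M$ is the EM update of $\tau^2$ obtained by minimizing the expected negative log-posterior. *)

theory Defs
  imports "HOL-Probability.Probability"
begin

definition sqnorm :: "nat \<Rightarrow> (nat \<Rightarrow> real) \<Rightarrow> real" where
  "sqnorm p y = (\<Sum>i<p. (y i)\<^sup>2)"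

definition kappa :: "real \<Rightarrow> real" where
  "kappa tau2 = 1 / (1 + tau2)"

text \<open>w(tau^2) = (1-kappa)^2 s + (1-kappa) p = E[ ||beta||^2 | y, tau ].\<close>
definition w_fun :: "nat \<Rightarrow> real \<Rightarrow> real \<Rightarrow> real" where
  "w_fun p s tau2 = (1 - kappa tau2)\<^sup>2 * s + (1 - kappa tau2) * real p"

definition em_obj :: "nat \<Rightarrow> real \<Rightarrow> real \<Rightarrow> real \<Rightarrow> real" where
  "em_obj p s tau2 t = real p / 2 * ln t + w_fun p s tau2 / (2 * t) + ln (1 + t)"

definition em_map :: "nat \<Rightarrow> real \<Rightarrow> real \<Rightarrow> real" where
  "em_map p s tau2 = arg_min (em_obj p s tau2) (\<lambda>t. t > 0)"

definition normal_vec :: "nat \<Rightarrow> (nat \<Rightarrow> real) \<Rightarrow> (nat \<Rightarrow> real) measure" where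
  "normal_vec p beta = PiM {..<p} (\<lambda>i. density lborel (normal_density (beta i) 1))"

definition risk :: "nat \<Rightarrow> ((nat \<Rightarrow> real) \<Rightarrow> (nat \<Rightarrow> real)) \<Rightarrow> (nat \<Rightarrow> real) \<Rightarrow> ennreal" where
  "risk p delta beta =
     (\<integral>\<^sup>+ x. ennreal (\<Sum>i<p. (delta x i - beta i)\<^sup>2) \<partial>normal_vec p beta)"

definition estimator :: "nat \<Rightarrow> ((nat \<Rightarrow> real) \<Rightarrow> (nat \<Rightarrow> real)) \<Rightarrow> bool" where
  "estimator p delta \<longleftrightarrow> (\<forall>i<p. (\<lambda>x. delta x i) \<in> borel_measurable (PiM {..<p} (\<lambda>_. borel)))"

definition minimax :: "nat \<Rightarrow> ((nat \<Rightarrow> real) \<Rightarrow> (nat \<Rightarrow> real)) \<Rightarrow> bool" where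
  "minimax p delta \<longleftrightarrow> estimator p delta \<and>
     (\<forall>delta'. estimator p delta' \<longrightarrow> (SUP beta. risk p delta beta) \<le> (SUP beta. risk p delta' beta))"

end

(* Fixed point: the derivative of the EM objective in t is q(t) / (2 t^2 (1 + t)) with
   q(t) = (p + 2) t^2 + (p - w) t - w.  For tau^2 = tau_*^2 one checks q(tau_*^2) = 0, and the
   other root of q is negative, so the objective decreases on (0, tau_*^2) and increases after it:
   tau_*^2 is its unique minimiser.

   Minimaxity: Stein's identity E[(x_i - beta_i) g(x)] = E[d g / d x_i (x)] turns the risk of
   (1 - c / ||x||^2) x into p - c (2 (p - 2) - c) E ||x||^-2, which is at most p, the constant risk
   of x, when c = p + 2 and p >= 6 (E ||x||^-2 is finite as p >= 3).  Conversely, under the prior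
   beta ~ N(0, sigma^2 I) the Bayes risk of any estimator is at least the total posterior variance
   p sigma^2 / (1 + sigma^2); letting sigma tend to infinity, every estimator has maximal risk at
   least p. *)

theory Submission
  imports Defs "HOL-Real_Asymp.Real_Asymp"
begin

section \<open>The EM fixed point\<close>

lemma arg_min_eq_of_strict_min:
  fixes f :: "'a \<Rightarrow> 'b::linorder"
  assumes "P c" and "\<And>t. P t \<Longrightarrow> t \<noteq> c \<Longrightarrow> f c < f t"
  shows "arg_min f P = c"
  unfolding arg_min_def
proof (rule some_equality)
  show "is_arg_min f P c"
    using assms by (auto simp: is_arg_min_def) (metis less_asym less_irrefl)
  show "x = c" if "is_arg_min f P x" for x
    using that assms by (auto simp: is_arg_min_def)
qed

lemma arg_min_eq_of_deriv_sign:
  fixes f f' :: "real \<Rightarrow> real"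
  assumes "a < c"
    and deriv: "\<And>t. a < t \<Longrightarrow> (f has_real_derivative f' t) (at t)"
    and neg: "\<And>t. a < t \<Longrightarrow> t < c \<Longrightarrow> f' t < 0"
    and pos: "\<And>t. c < t \<Longrightarrow> f' t > 0"
  shows "arg_min f (\<lambda>t. a < t) = c"
proof (rule arg_min_eq_of_strict_min)
  show "a < c" by fact
  fix t assume t: "a < t" "t \<noteq> c"
  have cont: "continuous_on {u..v} f" if "a < u" for u v
    by (rule DERIV_continuous_on[where D = f']) (use deriv that in \<open>auto intro: has_field_derivative_at_within\<close>)
  consider "t < c" | "c < t" using t(2) by linarith
  then show "f c < f t"
  proof cases
    case 1
    show ?thesis
    proof (rule DERIV_neg_imp_decreasing_open[OF 1])
      show "\<exists>y. (f has_real_derivative y) (at x) \<and> y < 0" if "t < x" "x < c" for x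
        using deriv[of x] neg[of x] that t(1) by auto
    qed (rule cont[OF t(1)])
  next
    case 2
    show ?thesis
    proof (rule DERIV_pos_imp_increasing_open[OF 2])
      show "\<exists>y. (f has_real_derivative y) (at x) \<and> y > 0" if "c < x" "x < t" for x
        using deriv[of x] pos[of x] that \<open>a < c\<close> by auto
    qed (rule cont[OF \<open>a < c\<close>])
  qed
qed

lemma em_obj_has_derivative:
  assumes "t > 0"
  shows "(em_obj p s tau2 has_real_derivative
           ((real p + 2) * t^2 + (real p - w_fun p s tau2) * t - w_fun p s tau2) / (2 * t^2 * (1 + t))) (at t)"
proof -
  let ?w = "w_fun p s tau2"
  have "(em_obj p s tau2 has_real_derivative (real p / 2 * (1/t) - ?w / (2*t^2) + 1 / (1 + t))) (at t)"
    unfolding em_obj_def using assms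
    by (auto intro!: derivative_eq_intros simp: power2_eq_square)
  moreover have "real p / 2 * (1/t) - ?w / (2*t^2) + 1 / (1 + t)
      = ((real p + 2) * t^2 + (real p - ?w) * t - ?w) / (2 * t^2 * (1 + t))"
    using assms by (simp add: field_simps power2_eq_square)
  ultimately show ?thesis by simp
qed

lemma quadratic_eq_factor_of_pos_root:
  fixes a b c x\<^sub>0 t :: real
  assumes "a > 0" "x\<^sub>0 > 0" and root: "a * x\<^sub>0^2 + b * x\<^sub>0 - c = 0"
  shows "a * t^2 + b * t - c = a * ((t - x\<^sub>0) * (t + c / (a * x\<^sub>0)))"
proof -
  have b: "b = c / x\<^sub>0 - a * x\<^sub>0"
    using root assms(2) by (simp add: field_simps power2_eq_square)
  show ?thesis unfolding b using assms(1,2) by (simp add: field_simps power2_eq_square)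
qed

lemma em_map_fixed_point:
  assumes s: "s > real p + 2"
  defines "k \<equiv> (real p + 2) / s"
  shows "em_map p s ((1 - k) / k) = (1 - k) / k"
proof -
  define tau where "tau = (1 - k) / k"
  define w where "w = w_fun p s tau"
  have k: "0 < k" "k < 1" using s by (auto simp: k_def field_simps)
  have tau: "tau > 0" using k by (simp add: tau_def)
  have w: "w = (1 - k)^2 * s + (1 - k) * real p"
    using k by (simp add: w_def w_fun_def kappa_def tau_def field_simps)
  have root: "(real p + 2) * tau^2 + (real p - w) * tau - w = 0"
  proof -
    have "(real p + 2) * tau^2 + (real p - w) * tau - w = (1 - k) * (1 - k) / k^2 * ((real p + 2) - k * s)"
      using k unfolding w tau_def by (simp add: field_simps power2_eq_square)
    then show ?thesis using s by (simp add: k_def)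
  qed
  define r where "r = - w / ((real p + 2) * tau)"
  have "w > 0" using k s unfolding w by (simp add: add_pos_nonneg)
  then have r: "r < 0" using tau by (simp add: r_def divide_pos_pos)
  have factor: "(real p + 2) * t^2 + (real p - w) * t - w = (real p + 2) * ((t - tau) * (t - r))" for t
    using quadratic_eq_factor_of_pos_root[of "real p + 2" tau "real p - w" w t] root tau
    by (simp add: r_def)
  define f' where "f' t = (real p + 2) * ((t - tau) * (t - r)) / (2 * t^2 * (1 + t))" for t
  have "arg_min (em_obj p s tau) (\<lambda>t. 0 < t) = tau"
  proof (rule arg_min_eq_of_deriv_sign[where f' = f'])
    show "(em_obj p s tau has_real_derivative f' t) (at t)" if "0 < t" for t
      using em_obj_has_derivative[OF that, of p s tau] by (simp add: f'_def factor flip: w_def)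
    show "f' t < 0" if "0 < t" "t < tau" for t
    proof -
      have "(real p + 2) * ((t - tau) * (t - r)) < 0"
        using that r by (intro mult_pos_neg mult_neg_pos) auto
      then show ?thesis using that by (simp add: f'_def divide_neg_pos)
    qed
    show "f' t > 0" if "tau < t" for t
    proof -
      have "(real p + 2) * ((t - tau) * (t - r)) > 0"
        using that r tau by (intro mult_pos_pos) auto
      then show ?thesis using that tau by (simp add: f'_def)
    qed
  qed (rule tau)
  then show ?thesis by (simp add: em_map_def tau_def)
qed

section \<open>The Gaussian sampling model\<close>

definition normal_measure :: "real \<Rightarrow> real measure" where
  "normal_measure b = density lborel (normal_density b 1)"

lemma normal_vec_eq_PiM_normal_measure: "normal_vec p beta = PiM {..<p} (\<lambda>i. normal_measure (beta i))"
  by (simp add: normal_vec_def normal_measure_def)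

lemma prob_space_normal_measure: "prob_space (normal_measure b)"
  unfolding normal_measure_def by (rule prob_space_normal_density) simp

lemma sets_normal_measure [simp, measurable_cong]: "sets (normal_measure b) = sets borel"
  by (simp add: normal_measure_def)

lemma space_normal_measure [simp]: "space (normal_measure b) = UNIV"
  by (simp add: normal_measure_def)

lemma AE_normal_measure_neq: "AE x in normal_measure b. x \<noteq> c"
  unfolding normal_measure_def by (subst AE_density) (auto intro: AE_mp[OF AE_lborel_singleton])

lemma integrable_normal_measure_iff:
  fixes f :: "real \<Rightarrow> real"
  assumes "f \<in> borel_measurable borel"
  shows "integrable (normal_measure b) f \<longleftrightarrow> integrable lborel (\<lambda>x. normal_density b 1 x * f x)"
  unfolding normal_measure_def using assms by (subst integrable_density) auto

lemma integral_normal_measure: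
  fixes f :: "real \<Rightarrow> real"
  assumes "f \<in> borel_measurable borel"
  shows "integral\<^sup>L (normal_measure b) f = (\<integral>x. normal_density b 1 x * f x \<partial>lborel)"
  unfolding normal_measure_def using assms by (subst integral_density) auto

lemma product_prob_space_normal_measure: "product_prob_space (\<lambda>i. normal_measure (beta i))"
  unfolding product_prob_space_def product_prob_space_axioms_def product_sigma_finite_def
  using prob_space_normal_measure by (auto intro: prob_space_imp_sigma_finite)

lemma normal_measure_second_moment:
  "integrable (normal_measure b) (\<lambda>t. (t - b)^2)" "(\<integral>t. (t - b)^2 \<partial>normal_measure b) = 1"
proof -
  show "integrable (normal_measure b) (\<lambda>t. (t - b)^2)"
    using integrable_normal_moment[of 1 b 2] by (subst integrable_normal_measure_iff) auto
  show "(\<integral>t. (t - b)^2 \<partial>normal_measure b) = 1"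
    using integral_normal_moment_even[of 1 b 1] by (subst integral_normal_measure) auto
qed

lemma
  fixes g :: "real \<Rightarrow> real"
  assumes "finite I" "i \<in> I" "g \<in> borel_measurable borel" "integrable (normal_measure (beta i)) g"
  shows integrable_PiM_normal_component: "integrable (PiM I (\<lambda>i. normal_measure (beta i))) (\<lambda>x. g (x i))"
    and integral_PiM_normal_component:
      "(\<integral>x. g (x i) \<partial>PiM I (\<lambda>i. normal_measure (beta i))) = integral\<^sup>L (normal_measure (beta i)) g"
proof -
  let ?N = "PiM I (\<lambda>i. normal_measure (beta i))"
  have distr: "distr ?N (normal_measure (beta i)) (\<lambda>x. x i) = normal_measure (beta i)"
    by (rule distr_PiM_component[OF prob_space_normal_measure \<open>i \<in> I\<close>])
  have meas: "(\<lambda>x. x i) \<in> measurable ?N (normal_measure (beta i))"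
    using \<open>i \<in> I\<close> by measurable
  have g: "g \<in> borel_measurable (normal_measure (beta i))" using assms(3) by simp
  show "integrable ?N (\<lambda>x. g (x i))"
    using assms(4) integrable_distr_eq[OF meas g] distr by simp
  show "(\<integral>x. g (x i) \<partial>?N) = integral\<^sup>L (normal_measure (beta i)) g"
    using integral_distr[OF meas g] distr by simp
qed

section \<open>Integrability of the inverse squared norm\<close>

text \<open>To exploit independence, \<open>1/\<parallel>x\<parallel>\<^sup>2\<close> is dominated via AM-GM by the product
  \<open>\<Prod>\<bar>x\<^sub>j\<bar>\<^bsup>-2/3\<^esup>\<close> over three coordinates, each factor being integrable against the normal density.\<close>

lemma integrable_abs_powr_neg_two_thirds_local:
  "integrable lborel (\<lambda>t::real. indicator {-1..1} t * \<bar>t\<bar> powr (-2/3))"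
proof -
  have r: "(\<lambda>t::real. \<bar>t\<bar> powr (-2/3)) integrable_on {0..1}"
    using integrable_on_powr_from_0[of "-2/3" 1] by (rule integrable_eq) simp_all
  then have "(\<lambda>t::real. \<bar>-t\<bar> powr (-2/3)) integrable_on {0..1}" by simp
  then have "(\<lambda>x. (\<lambda>t::real. \<bar>-t\<bar> powr (-2/3)) (-x)) integrable_on {-1..-0}"
    by (rule iffD2[OF Henstock_Kurzweil_Integration.integrable_reflect_real])
  then have l: "(\<lambda>t::real. \<bar>t\<bar> powr (-2/3)) integrable_on {-1..0}" by simp
  have "(\<lambda>t::real. \<bar>t\<bar> powr (-2/3)) integrable_on {-1..1}"
    by (rule Henstock_Kurzweil_Integration.integrable_combine[OF _ _ l r]) auto
  then have "(\<lambda>t::real. \<bar>t\<bar> powr (-2/3)) absolutely_integrable_on {-1..1}"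
    by (rule nonnegative_absolutely_integrable_1) simp
  then have "integrable lebesgue (\<lambda>t::real. indicator {-1..1} t * \<bar>t\<bar> powr (-2/3))"
    by (simp add: set_integrable_def)
  then show ?thesis by (subst (asm) integrable_completion) auto
qed

lemma normal_density_le_one: "normal_density b 1 t \<le> 1"
proof -
  have "1 \<le> sqrt (2 * pi)" using pi_gt3 by (simp add: real_le_rsqrt)
  then have "1 / sqrt (2 * pi) \<le> 1" by simp
  moreover have "exp (- ((t - b)\<^sup>2) / 2) \<le> 1" by simp
  ultimately show ?thesis
    unfolding normal_density_def using mult_mono[of "1 / sqrt (2 * pi)" 1 "exp (- ((t - b)\<^sup>2) / 2)" 1]
    by simp
qed

lemma integrable_normal_measure_abs_powr: "integrable (normal_measure b) (\<lambda>t. \<bar>t\<bar> powr (-2/3))"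
proof -
  let ?h = "\<lambda>t::real. \<bar>t\<bar> powr (-2/3)"
  have "integrable lborel (\<lambda>t. normal_density b 1 t * ?h t)"
  proof (rule Bochner_Integration.integrable_bound)
    show "integrable lborel (\<lambda>t. normal_density b 1 t + indicator {-1..1} t * ?h t)"
      using integrable_abs_powr_neg_two_thirds_local by auto
    have "normal_density b 1 t * ?h t \<le> normal_density b 1 t + indicator {-1..1} t * ?h t" for t
    proof (cases "\<bar>t\<bar> \<le> 1")
      case True
      then have "normal_density b 1 t * ?h t \<le> 1 * ?h t"
        using normal_density_le_one by (intro mult_right_mono) auto
      then show ?thesis using True by (auto simp: indicator_def abs_le_iff intro: add_increasing)
    next
      case False
      then have "?h t \<le> 1" using powr_less_one[of "\<bar>t\<bar>" "-2/3"] by auto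
      then have "normal_density b 1 t * ?h t \<le> normal_density b 1 t * 1"
        by (intro mult_left_mono) auto
      then show ?thesis using False by (auto simp: indicator_def)
    qed
    then show "AE t in lborel. norm (normal_density b 1 t * ?h t)
        \<le> norm (normal_density b 1 t + indicator {-1..1} t * ?h t)"
      by (intro AE_I2) (simp add: abs_of_nonneg)
  qed measurable
  then show ?thesis by (subst integrable_normal_measure_iff) auto
qed

lemma three_mul_le_sum_cubes:
  fixes u v w :: real
  assumes "u \<ge> 0" "v \<ge> 0" "w \<ge> 0"
  shows "3 * u * v * w \<le> u^3 + v^3 + w^3"
proof -
  have "2 * (u^3 + v^3 + w^3 - 3 * u * v * w) = (u + v + w) * ((u - v)^2 + (v - w)^2 + (w - u)^2)"
    by (simp add: algebra_simps power2_eq_square power3_eq_cube)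
  moreover have "(u + v + w) * ((u - v)^2 + (v - w)^2 + (w - u)^2) \<ge> 0"
    using assms by simp
  ultimately have "0 \<le> u^3 + v^3 + w^3 - 3 * u * v * w" by simp
  then show ?thesis by linarith
qed

lemma inverse_sum_three_squares_le:
  fixes a b c :: real
  assumes "a \<noteq> 0" "b \<noteq> 0" "c \<noteq> 0"
  shows "1 / (a^2 + b^2 + c^2) \<le> \<bar>a\<bar> powr (-2/3) * \<bar>b\<bar> powr (-2/3) * \<bar>c\<bar> powr (-2/3)"
proof -
  define u v w where "u = \<bar>a\<bar> powr (2/3)" and "v = \<bar>b\<bar> powr (2/3)" and "w = \<bar>c\<bar> powr (2/3)"
  have pos: "u > 0" "v > 0" "w > 0" using assms by (auto simp: u_def v_def w_def)
  have cube: "(\<bar>t\<bar> powr (2/3))^3 = t^2" for t :: real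
  proof (cases "t = 0")
    case False
    then have "(\<bar>t\<bar> powr (2/3))^3 = (\<bar>t\<bar> powr (2/3)) powr (real 3)"
      by (subst powr_realpow) auto
    also have "\<dots> = \<bar>t\<bar> powr (real 2)" by (simp add: powr_powr)
    also have "\<dots> = t^2" using False by (subst powr_realpow) auto
    finally show ?thesis .
  qed simp
  have "3 * u * v * w \<le> a^2 + b^2 + c^2"
    using three_mul_le_sum_cubes[of u v w] pos by (simp add: u_def v_def w_def cube)
  moreover have "3 * u * v * w > 0" using pos by simp
  ultimately have "1 / (a^2 + b^2 + c^2) \<le> 1 / (3 * u * v * w)"
    by (intro divide_left_mono) auto
  also have "\<dots> \<le> 1 / (u * v * w)" using pos by (simp add: field_simps)
  also have "\<dots> = \<bar>a\<bar> powr (-2/3) * \<bar>b\<bar> powr (-2/3) * \<bar>c\<bar> powr (-2/3)"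
    by (simp add: u_def v_def w_def powr_minus_divide)
  finally show ?thesis .
qed

lemma inverse_sum_squares_le_prod_powr:
  fixes x :: "'i \<Rightarrow> real"
  assumes "finite I" "J \<subseteq> I" "card J = 3" and nonzero: "\<forall>j\<in>J. x j \<noteq> 0"
  shows "1 / (\<Sum>j\<in>I. (x j)^2) \<le> (\<Prod>j\<in>J. \<bar>x j\<bar> powr (-2/3))"
proof -
  obtain j1 j2 j3 where J: "J = {j1, j2, j3}" "j1 \<noteq> j2" "j2 \<noteq> j3" "j1 \<noteq> j3"
    using \<open>card J = 3\<close> by (auto simp: card_3_iff)
  have "(x j1)^2 + (x j2)^2 + (x j3)^2 = (\<Sum>j\<in>J. (x j)^2)" using J by simp
  also have "\<dots> \<le> (\<Sum>j\<in>I. (x j)^2)" using assms(1,2) by (intro sum_mono2) auto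
  finally have le: "(x j1)^2 + (x j2)^2 + (x j3)^2 \<le> (\<Sum>j\<in>I. (x j)^2)" .
  have pos: "(x j1)^2 + (x j2)^2 + (x j3)^2 > 0" using nonzero J by (simp add: add_pos_nonneg)
  have "1 / (\<Sum>j\<in>I. (x j)^2) \<le> 1 / ((x j1)^2 + (x j2)^2 + (x j3)^2)"
    using le pos by (intro divide_left_mono) auto
  also have "\<dots> \<le> \<bar>x j1\<bar> powr (-2/3) * \<bar>x j2\<bar> powr (-2/3) * \<bar>x j3\<bar> powr (-2/3)"
    using nonzero J by (intro inverse_sum_three_squares_le) auto
  finally show ?thesis using J by simp
qed

lemma integrable_inverse_sum_squares:
  fixes I :: "'i set" and beta :: "'i \<Rightarrow> real"
  assumes fin: "finite I" and card: "card I \<ge> 3"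
  shows "integrable (PiM I (\<lambda>i. normal_measure (beta i))) (\<lambda>x. 1 / (\<Sum>j\<in>I. (x j)^2))"
proof -
  interpret product_prob_space "\<lambda>i. normal_measure (beta i)" I
    by (rule product_prob_space_normal_measure)
  let ?N = "PiM I (\<lambda>i. normal_measure (beta i))"
  obtain J where J: "J \<subseteq> I" "card J = 3" using obtain_subset_with_card_n[OF card] by blast
  define H where "H j t = (if j \<in> J then \<bar>t\<bar> powr (-2/3) else 1)" for j and t :: real
  have prodH: "(\<Prod>j\<in>I. H j (x j)) = (\<Prod>j\<in>J. \<bar>x j\<bar> powr (-2/3))" for x
    unfolding H_def using fin J(1) by (simp add: prod.If_cases Int_absorb1[OF J(1)])
  have intH: "integrable ?N (\<lambda>x. \<Prod>j\<in>I. H j (x j))"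
  proof (rule product_integrable_prod[OF fin])
    fix i assume "i \<in> I"
    interpret prob_space "normal_measure (beta i)" by (rule prob_space_normal_measure)
    show "integrable (normal_measure (beta i)) (H i)"
      using integrable_normal_measure_abs_powr by (cases "i \<in> J") (simp_all add: H_def[abs_def])
  qed
  have nonzero: "AE x in ?N. \<forall>j\<in>J. x j \<noteq> 0"
    using J(1) fin
    by (intro AE_finite_allI AE_PiM_component[OF prob_space_normal_measure _ AE_normal_measure_neq])
      (auto intro: finite_subset)
  show ?thesis
  proof (rule Bochner_Integration.integrable_bound[OF intH])
    show "AE x in ?N. norm (1 / (\<Sum>j\<in>I. (x j)^2)) \<le> norm (\<Prod>j\<in>I. H j (x j))"
      using nonzero
    proof eventually_elim
      case (elim x)
      have "0 \<le> 1 / (\<Sum>j\<in>I. (x j)^2)" by (simp add: sum_nonneg)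
      then show ?case
        using inverse_sum_squares_le_prod_powr[OF fin J elim] by (simp add: prodH)
    qed
  qed measurable
qed

section \<open>Stein's identity\<close>

lemma normal_density_unit_has_derivative:
  "(normal_density b 1 has_real_derivative (- (y - b) * normal_density b 1 y)) (at y)"
proof -
  define c where "c = 1 / sqrt (2 * pi)"
  have "normal_density b 1 = (\<lambda>y. c * exp (- ((y - b)^2) / 2))"
    by (simp add: fun_eq_iff normal_density_def c_def)
  then show ?thesis
    by (auto intro!: derivative_eq_intros simp: power2_eq_square field_simps)
qed

lemma integral_deriv_eq_zero_if_vanishing_at_infinity:
  fixes F f :: "real \<Rightarrow> real"
  assumes "\<And>y. (F has_real_derivative f y) (at y)" "continuous_on UNIV f" "integrable lborel f"
    and "(F \<longlongrightarrow> 0) at_bot" "(F \<longlongrightarrow> 0) at_top"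
  shows "integral\<^sup>L lborel f = 0"
proof -
  have "(LBINT y=-\<infinity>..\<infinity>. f y) = 0 - 0"
  proof (rule interval_integral_FTC_integrable)
    show "(F has_vector_derivative f y) (at y)" for y
      using assms(1)[of y] by (simp add: has_real_derivative_iff_has_vector_derivative)
    show "isCont f y" for y using assms(2) by (simp add: continuous_on_eq_continuous_at)
    show "set_integrable lborel (einterval (- \<infinity>) \<infinity>) f"
      using assms(3) by (simp add: set_integrable_def)
    show "((F \<circ> real_of_ereal) \<longlongrightarrow> 0) (at_right (- \<infinity>))" "((F \<circ> real_of_ereal) \<longlongrightarrow> 0) (at_left \<infinity>)"
      using assms(4,5) by (simp_all add: ereal_tendsto_simps)
  qed auto
  then show ?thesis by (simp add: interval_lebesgue_integral_def set_lebesgue_integral_def)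
qed

lemma abs_div_sq_add_le:
  fixes y z :: real
  assumes "z > 0"
  shows "\<bar>y / (y^2 + z)\<bar> \<le> 1 + 1 / z"
proof -
  have pos: "y^2 + z > 0" using assms by (simp add: add_nonneg_pos)
  have "\<bar>y\<bar> \<le> y^2 + 1"
    using sum_squares_bound[of "\<bar>y\<bar>" 1] by (simp add: power2_eq_square)
  then have "\<bar>y / (y^2 + z)\<bar> \<le> (y^2 + 1) / (y^2 + z)"
    using pos by (simp add: abs_divide divide_right_mono)
  also have "\<dots> \<le> 1 + 1 / z"
  proof -
    have "y^2 + 1 \<le> y^2 + z + y^2 / z + 1" using assms by simp
    also have "\<dots> = (1 + 1 / z) * (y^2 + z)" using assms by (simp add: field_simps)
    finally show ?thesis using pos by (simp add: pos_divide_le_eq)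
  qed
  finally show ?thesis .
qed

lemma abs_deriv_div_sq_add_le:
  fixes y z :: real
  assumes "z > 0"
  shows "\<bar>(z - y^2) / (y^2 + z)^2\<bar> \<le> 1 / z"
proof -
  have pos: "y^2 + z > 0" using assms by (simp add: add_nonneg_pos)
  have "\<bar>(z - y^2) / (y^2 + z)^2\<bar> \<le> (y^2 + z) / (y^2 + z)^2"
    using assms by (simp add: abs_divide divide_right_mono abs_le_iff)
  also have "\<dots> = 1 / (y^2 + z)" using pos by (simp add: power2_eq_square)
  also have "\<dots> \<le> 1 / z" using assms pos by (intro divide_left_mono) auto
  finally show ?thesis .
qed

lemma
  fixes z b :: real
  assumes z: "z > 0"
  shows integrable_normal_density_stein_lhs:
      "integrable lborel (\<lambda>y. normal_density b 1 y * ((y - b) * (y / (y^2 + z))))"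
    and integrable_normal_density_stein_rhs:
      "integrable lborel (\<lambda>y. normal_density b 1 y * ((z - y^2) / (y^2 + z)^2))"
proof -
  show "integrable lborel (\<lambda>y. normal_density b 1 y * ((y - b) * (y / (y^2 + z))))"
  proof (rule Bochner_Integration.integrable_bound)
    show "integrable lborel (\<lambda>y. (normal_density b 1 y * \<bar>y - b\<bar>^1) * (1 + 1 / z))"
      using integrable_normal_moment_abs[of 1 b 1] by auto
    show "AE y in lborel. norm (normal_density b 1 y * ((y - b) * (y / (y^2 + z))))
        \<le> norm ((normal_density b 1 y * \<bar>y - b\<bar>^1) * (1 + 1 / z))"
    proof (rule AE_I2)
      fix y
      have "normal_density b 1 y * \<bar>y - b\<bar> * \<bar>y / (y^2 + z)\<bar> \<le> normal_density b 1 y * \<bar>y - b\<bar> * (1 + 1 / z)"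
        using abs_div_sq_add_le[OF z, of y] by (intro mult_left_mono) auto
      then show "norm (normal_density b 1 y * ((y - b) * (y / (y^2 + z))))
          \<le> norm ((normal_density b 1 y * \<bar>y - b\<bar>^1) * (1 + 1 / z))"
        using z by (simp add: abs_mult mult.assoc)
    qed
  qed measurable
  show "integrable lborel (\<lambda>y. normal_density b 1 y * ((z - y^2) / (y^2 + z)^2))"
  proof (rule Bochner_Integration.integrable_bound)
    show "integrable lborel (\<lambda>y. normal_density b 1 y * (1 / z))" by auto
    show "AE y in lborel. norm (normal_density b 1 y * ((z - y^2) / (y^2 + z)^2)) \<le> norm (normal_density b 1 y * (1 / z))"
    proof (rule AE_I2)
      fix y
      have "normal_density b 1 y * \<bar>(z - y^2) / (y^2 + z)^2\<bar> \<le> normal_density b 1 y * (1 / z)"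
        using abs_deriv_div_sq_add_le[OF z, of y] by (intro mult_left_mono) auto
      then show "norm (normal_density b 1 y * ((z - y^2) / (y^2 + z)^2)) \<le> norm (normal_density b 1 y * (1 / z))"
        using z by (simp add: abs_mult)
    qed
  qed measurable
qed

lemma stein_identity_normal_measure:
  fixes z b :: real
  assumes z: "z > 0"
  shows "(\<integral>y. (y - b) * (y / (y^2 + z)) \<partial>normal_measure b) = (\<integral>y. (z - y^2) / (y^2 + z)^2 \<partial>normal_measure b)"
proof -
  define f1 where "f1 y = normal_density b 1 y * ((y - b) * (y / (y^2 + z)))" for y
  define f2 where "f2 y = normal_density b 1 y * ((z - y^2) / (y^2 + z)^2)" for y
  have pz: "y^2 + z > 0" for y :: real using z by (simp add: add_nonneg_pos)
  have int1: "integrable lborel f1"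
    unfolding f1_def by (rule integrable_normal_density_stein_lhs[OF z])
  have int2: "integrable lborel f2"
    unfolding f2_def by (rule integrable_normal_density_stein_rhs[OF z])
  have "integral\<^sup>L lborel (\<lambda>y. f2 y - f1 y) = 0"
  proof (rule integral_deriv_eq_zero_if_vanishing_at_infinity)
    show "((\<lambda>y. y / (y^2 + z) * normal_density b 1 y) has_real_derivative f2 y - f1 y) (at y)" for y
    proof -
      have "((\<lambda>y. y / (y^2 + z)) has_real_derivative ((z - y^2) / (y^2 + z)^2)) (at y)"
        using pz[of y] by (auto intro!: derivative_eq_intros simp: power2_eq_square field_simps)
      from DERIV_mult[OF this normal_density_unit_has_derivative[of b y]] show ?thesis
        unfolding f1_def f2_def by (rule DERIV_cong) (use pz[of y] in \<open>simp add: field_simps\<close>)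
    qed
    have "isCont (\<lambda>y. f2 y - f1 y) y" for y
      using DERIV_isCont[OF normal_density_unit_has_derivative] pz[of y]
      unfolding f1_def f2_def by (intro continuous_intros) auto
    then show "continuous_on UNIV (\<lambda>y. f2 y - f1 y)"
      by (simp add: continuous_at_imp_continuous_on)
    show "integrable lborel (\<lambda>y. f2 y - f1 y)" using int1 int2 by simp
    show "((\<lambda>y. y / (y^2 + z) * normal_density b 1 y) \<longlongrightarrow> 0) at_bot"
      unfolding normal_density_def using z by real_asymp
    show "((\<lambda>y. y / (y^2 + z) * normal_density b 1 y) \<longlongrightarrow> 0) at_top"
      unfolding normal_density_def using z by real_asymp
  qed
  then have "integral\<^sup>L lborel f1 = integral\<^sup>L lborel f2" using int1 int2 by simp
  moreover have "(\<integral>y. (y - b) * (y / (y^2 + z)) \<partial>normal_measure b) = integral\<^sup>L lborel f1"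
    unfolding f1_def by (rule integral_normal_measure) measurable
  moreover have "(\<integral>y. (z - y^2) / (y^2 + z)^2 \<partial>normal_measure b) = integral\<^sup>L lborel f2"
    unfolding f2_def by (rule integral_normal_measure) measurable
  ultimately show ?thesis by simp
qed

lemma abs_mul_div_le_half_sq_add_inverse:
  fixes a t S :: real
  assumes "t^2 \<le> S"
  shows "\<bar>a * (t / S)\<bar> \<le> (a^2 + 1 / S) / 2"
proof -
  have "(t / S)^2 \<le> 1 / S"
  proof (cases "S = 0")
    case False
    have "(t / S)^2 = t^2 / S^2" by (simp add: power_divide)
    also have "\<dots> \<le> S / S^2" using assms by (intro divide_right_mono) auto
    also have "\<dots> = 1 / S" using False by (simp add: power2_eq_square)
    finally show ?thesis .
  qed simp
  moreover have "2 * (\<bar>a\<bar> * \<bar>t / S\<bar>) \<le> a^2 + (t / S)^2"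
    using sum_squares_bound[of "\<bar>a\<bar>" "\<bar>t / S\<bar>"] by (simp only: power2_abs mult.assoc)
  moreover have "\<And>P Q R T. 2 * (P::real) \<le> T + Q \<Longrightarrow> Q \<le> R \<Longrightarrow> P \<le> (T + R) / 2"
    by (simp add: field_simps)
  ultimately show ?thesis by (metis abs_mult)
qed

lemma abs_sub_two_sq_div_sq_le_inverse:
  fixes t S :: real
  assumes "t^2 \<le> S"
  shows "\<bar>(S - 2 * t^2) / S^2\<bar> \<le> 1 / S"
proof (cases "S = 0")
  case False
  then have pos: "S > 0" using assms by (smt (verit) zero_le_power2)
  have "\<bar>S - 2 * t^2\<bar> \<le> S" using assms by (simp add: abs_le_iff)
  then have "\<bar>(S - 2 * t^2) / S^2\<bar> \<le> S / S^2" using pos by (simp add: abs_divide divide_right_mono)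
  also have "\<dots> = 1 / S" using pos by (simp add: power2_eq_square)
  finally show ?thesis .
qed simp

lemma
  fixes I :: "'i set" and beta :: "'i \<Rightarrow> real"
  assumes fin: "finite I" and i: "i \<in> I"
    and inv: "integrable (PiM I (\<lambda>i. normal_measure (beta i))) (\<lambda>x. 1 / (\<Sum>k\<in>I. (x k)^2))"
  shows integrable_stein_lhs:
      "integrable (PiM I (\<lambda>i. normal_measure (beta i))) (\<lambda>x. (x i - beta i) * (x i / (\<Sum>k\<in>I. (x k)^2)))"
    and integrable_stein_rhs:
      "integrable (PiM I (\<lambda>i. normal_measure (beta i)))
         (\<lambda>x. ((\<Sum>k\<in>I. (x k)^2) - 2 * (x i)^2) / (\<Sum>k\<in>I. (x k)^2)^2)"
proof -
  let ?N = "PiM I (\<lambda>i. normal_measure (beta i))"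
  have sq_le: "(x i)^2 \<le> (\<Sum>k\<in>I. (x k)^2)" for x :: "'i \<Rightarrow> real"
    using member_le_sum[of i I "\<lambda>k. (x k)^2"] fin i by simp
  have sq: "integrable ?N (\<lambda>x. (x i - beta i)^2)"
    by (rule integrable_PiM_normal_component[OF fin i _ normal_measure_second_moment(1)]) simp
  show "integrable ?N (\<lambda>x. (x i - beta i) * (x i / (\<Sum>k\<in>I. (x k)^2)))"
  proof (rule Bochner_Integration.integrable_bound)
    show "integrable ?N (\<lambda>x. ((x i - beta i)^2 + 1 / (\<Sum>k\<in>I. (x k)^2)) / 2)" using sq inv by auto
    show "AE x in ?N. norm ((x i - beta i) * (x i / (\<Sum>k\<in>I. (x k)^2)))
        \<le> norm (((x i - beta i)^2 + 1 / (\<Sum>k\<in>I. (x k)^2)) / 2)"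
      using order_trans[OF abs_mul_div_le_half_sq_add_inverse[OF sq_le] abs_ge_self] by (intro AE_I2) simp
  qed (use i in measurable)
  show "integrable ?N (\<lambda>x. ((\<Sum>k\<in>I. (x k)^2) - 2 * (x i)^2) / (\<Sum>k\<in>I. (x k)^2)^2)"
  proof (rule Bochner_Integration.integrable_bound)
    show "AE x in ?N. norm (((\<Sum>k\<in>I. (x k)^2) - 2 * (x i)^2) / (\<Sum>k\<in>I. (x k)^2)^2)
        \<le> norm (1 / (\<Sum>k\<in>I. (x k)^2))"
      using abs_sub_two_sq_div_sq_le_inverse[OF sq_le] by (intro AE_I2) (simp add: sum_nonneg)
  qed (use i inv in measurable)
qed

lemma sum_squares_fun_upd:
  fixes x :: "'i \<Rightarrow> real"
  assumes "finite I" "i \<notin> I"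
  shows "(\<Sum>k\<in>insert i I. ((x(i := y)) k)^2) = y^2 + (\<Sum>k\<in>I. (x k)^2)"
proof -
  have "(\<Sum>k\<in>I. ((x(i := y)) k)^2) = (\<Sum>k\<in>I. (x k)^2)"
    using assms(2) by (intro sum.cong) auto
  then show ?thesis using assms by simp
qed

lemma AE_PiM_sum_squares_pos:
  assumes "finite I" "j \<in> I"
  shows "AE x in PiM I (\<lambda>i. normal_measure (beta i)). (\<Sum>k\<in>I. (x k)^2) > 0"
  using AE_PiM_component[OF prob_space_normal_measure \<open>j \<in> I\<close> AE_normal_measure_neq[where c = 0]]
proof eventually_elim
  case (elim x)
  have "(x j)^2 \<le> (\<Sum>k\<in>I. (x k)^2)" using assms by (intro member_le_sum) auto
  moreover have "(x j)^2 > 0" using elim by simp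
  ultimately show ?case by linarith
qed

text \<open>Integrating out \<open>x\<^sub>i\<close> reduces the multivariate identity to the one-dimensional one, with \<open>z\<close> the
  squared norm of the other coordinates; another coordinate \<open>j\<close> makes \<open>z\<close> almost surely positive.\<close>

lemma stein_identity_PiM:
  fixes I :: "'i set" and beta :: "'i \<Rightarrow> real"
  assumes fin: "finite I" and i: "i \<in> I" and j: "j \<in> I" "j \<noteq> i"
    and inv: "integrable (PiM I (\<lambda>i. normal_measure (beta i))) (\<lambda>x. 1 / (\<Sum>k\<in>I. (x k)^2))"
  shows "(\<integral>x. (x i - beta i) * (x i / (\<Sum>k\<in>I. (x k)^2)) \<partial>PiM I (\<lambda>i. normal_measure (beta i)))
     = (\<integral>x. ((\<Sum>k\<in>I. (x k)^2) - 2 * (x i)^2) / (\<Sum>k\<in>I. (x k)^2)^2 \<partial>PiM I (\<lambda>i. normal_measure (beta i)))"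
proof -
  let ?N = "\<lambda>I. PiM I (\<lambda>i. normal_measure (beta i))"
  define S where "S x = (\<Sum>k\<in>I. (x k)^2)" for x :: "'i \<Rightarrow> real"
  define f1 where "f1 x = (x i - beta i) * (x i / S x)" for x
  define f2 where "f2 x = (S x - 2 * (x i)^2) / (S x)^2" for x
  have int1: "integrable (?N I) f1"
    unfolding f1_def S_def by (rule integrable_stein_lhs[OF fin i inv])
  have int2: "integrable (?N I) f2"
    unfolding f2_def S_def by (rule integrable_stein_rhs[OF fin i inv])
  define I' where "I' = I - {i}"
  have I: "I = insert i I'" "i \<notin> I'" "finite I'" using i fin by (auto simp: I'_def)
  have S_upd: "S (x(i := y)) = y^2 + (\<Sum>k\<in>I'. (x k)^2)" for x y
    unfolding S_def I(1) by (rule sum_squares_fun_upd[OF I(3,2)])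
  have rest_pos: "AE x in ?N I'. (\<Sum>k\<in>I'. (x k)^2) > 0"
    using j I(3) by (intro AE_PiM_sum_squares_pos[where j = j]) (auto simp: I'_def)
  interpret product_sigma_finite "\<lambda>i. normal_measure (beta i)"
    using product_prob_space_normal_measure unfolding product_prob_space_def by blast
  have sf: "sigma_finite_measure (normal_measure (beta i))"
    by (rule prob_space_imp_sigma_finite[OF prob_space_normal_measure])
  have "integral\<^sup>L (?N I) f1 = (\<integral>x. (\<integral>y. f1 (x(i := y)) \<partial>normal_measure (beta i)) \<partial>?N I')"
    unfolding I(1) by (rule product_integral_insert[OF I(3,2)]) (use int1 in \<open>simp only: I(1)[symmetric]\<close>)
  also have "\<dots> = (\<integral>x. (\<integral>y. f2 (x(i := y)) \<partial>normal_measure (beta i)) \<partial>?N I')"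
  proof (rule integral_cong_AE)
    show "(\<lambda>x. \<integral>y. f1 (x(i := y)) \<partial>normal_measure (beta i)) \<in> borel_measurable (?N I')"
      unfolding f1_def S_upd by (rule sigma_finite_measure.borel_measurable_lebesgue_integral[OF sf]) measurable
    show "(\<lambda>x. \<integral>y. f2 (x(i := y)) \<partial>normal_measure (beta i)) \<in> borel_measurable (?N I')"
      unfolding f2_def S_upd by (rule sigma_finite_measure.borel_measurable_lebesgue_integral[OF sf]) measurable
    show "AE x in ?N I'. (\<integral>y. f1 (x(i := y)) \<partial>normal_measure (beta i)) = (\<integral>y. f2 (x(i := y)) \<partial>normal_measure (beta i))"
      using rest_pos
    proof eventually_elim
      case (elim x)
      define z where "z = (\<Sum>k\<in>I'. (x k)^2)"
      have "f1 (x(i := y)) = (y - beta i) * (y / (y^2 + z))" for y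
        unfolding f1_def S_upd z_def by simp
      moreover have "f2 (x(i := y)) = (z - y^2) / (y^2 + z)^2" for y
        unfolding f2_def S_upd z_def by (simp add: algebra_simps)
      ultimately show ?case
        using stein_identity_normal_measure[of z "beta i"] elim by (simp add: z_def)
    qed
  qed
  also have "\<dots> = integral\<^sup>L (?N I) f2"
    unfolding I(1) by (rule product_integral_insert[OF I(3,2), symmetric]) (use int2 in \<open>simp only: I(1)[symmetric]\<close>)
  finally have "integral\<^sup>L (?N I) f1 = integral\<^sup>L (?N I) f2" .
  then show "(\<integral>x. (x i - beta i) * (x i / (\<Sum>k\<in>I. (x k)^2)) \<partial>?N I)
     = (\<integral>x. ((\<Sum>k\<in>I. (x k)^2) - 2 * (x i)^2) / (\<Sum>k\<in>I. (x k)^2)^2 \<partial>?N I)"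
    unfolding f1_def f2_def S_def .
qed

section \<open>The risk of the shrinkage estimators\<close>

lemma
  assumes "i < p"
  shows integrable_normal_vec_coordinate_sq: "integrable (normal_vec p beta) (\<lambda>x. (x i - beta i)^2)"
    and integral_normal_vec_coordinate_sq: "(\<integral>x. (x i - beta i)^2 \<partial>normal_vec p beta) = 1"
  unfolding normal_vec_eq_PiM_normal_measure
  using integrable_PiM_normal_component[OF _ _ _ normal_measure_second_moment(1), of "{..<p}" i beta]
    integral_PiM_normal_component[OF _ _ _ normal_measure_second_moment(1), of "{..<p}" i beta]
    normal_measure_second_moment(2) assms
  by auto

lemma risk_identity_estimator: "risk p (\<lambda>x. x) beta = ennreal (real p)"
proof -
  have "risk p (\<lambda>x. x) beta = ennreal (\<integral>x. (\<Sum>i<p. (x i - beta i)^2) \<partial>normal_vec p beta)"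
    unfolding risk_def
    by (rule nn_integral_eq_integral) (auto intro!: sum_nonneg integrable_normal_vec_coordinate_sq)
  also have "(\<integral>x. (\<Sum>i<p. (x i - beta i)^2) \<partial>normal_vec p beta) = real p"
    by (subst Bochner_Integration.integral_sum)
      (auto simp: integrable_normal_vec_coordinate_sq integral_normal_vec_coordinate_sq)
  finally show ?thesis .
qed

lemma shrinkage_loss_expand:
  "(\<Sum>i<p. ((1 - c / sqnorm p x) * x i - beta i)^2)
     = (\<Sum>i<p. (x i - beta i)^2) - 2 * c * (\<Sum>i<p. (x i - beta i) * (x i / sqnorm p x))
       + c^2 * (1 / sqnorm p x)"
proof -
  have sq: "(\<Sum>i<p. (x i / sqnorm p x)^2) = 1 / sqnorm p x"
  proof -
    have "(\<Sum>i<p. (x i / sqnorm p x)^2) = sqnorm p x / (sqnorm p x)^2"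
      by (simp add: power_divide sqnorm_def flip: sum_divide_distrib)
    also have "\<dots> = 1 / sqnorm p x" by (simp add: power2_eq_square)
    finally show ?thesis .
  qed
  have "(\<Sum>i<p. ((1 - c / sqnorm p x) * x i - beta i)^2)
      = (\<Sum>i<p. (x i - beta i)^2 - 2 * c * ((x i - beta i) * (x i / sqnorm p x)) + c^2 * (x i / sqnorm p x)^2)"
    by (intro sum.cong) (auto simp: power2_eq_square algebra_simps diff_divide_distrib add_divide_distrib)
  also have "\<dots> = (\<Sum>i<p. (x i - beta i)^2) - 2 * c * (\<Sum>i<p. (x i - beta i) * (x i / sqnorm p x))
      + c^2 * (\<Sum>i<p. (x i / sqnorm p x)^2)"
    by (simp add: sum.distrib sum_subtractf sum_distrib_left)
  finally show ?thesis unfolding sq .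
qed

lemma sum_stein_divergence:
  "(\<Sum>i<p. (sqnorm p x - 2 * (x i)^2) / (sqnorm p x)^2) = (real p - 2) * (1 / sqnorm p x)"
proof -
  have "(\<Sum>i<p. (sqnorm p x - 2 * (x i)^2) / (sqnorm p x)^2) = (real p * sqnorm p x - 2 * sqnorm p x) / (sqnorm p x)^2"
    by (simp add: sum_subtractf sqnorm_def sum_distrib_left flip: sum_divide_distrib)
  also have "\<dots> = (real p - 2) * (1 / sqnorm p x)"
    by (cases "sqnorm p x = 0") (simp_all add: power2_eq_square field_simps)
  finally show ?thesis .
qed

lemma integrable_inverse_sqnorm:
  assumes "p \<ge> 3"
  shows "integrable (normal_vec p beta) (\<lambda>x. 1 / sqnorm p x)"
  unfolding normal_vec_eq_PiM_normal_measure sqnorm_def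
  using assms by (intro integrable_inverse_sum_squares) auto

lemma
  assumes p: "p \<ge> 3"
  shows integrable_shrinkage_cross_term:
      "integrable (normal_vec p beta) (\<lambda>x. \<Sum>i<p. (x i - beta i) * (x i / sqnorm p x))"
    and integral_shrinkage_cross_term:
      "(\<integral>x. (\<Sum>i<p. (x i - beta i) * (x i / sqnorm p x)) \<partial>normal_vec p beta)
     = (real p - 2) * (\<integral>x. 1 / sqnorm p x \<partial>normal_vec p beta)"
proof -
  let ?N = "normal_vec p beta"
  define f1 where "f1 i x = (x i - beta i) * (x i / sqnorm p x)" for i x
  define f2 where "f2 i x = (sqnorm p x - 2 * (x i)^2) / (sqnorm p x)^2" for i x
  have inv: "integrable (PiM {..<p} (\<lambda>i. normal_measure (beta i))) (\<lambda>x. 1 / (\<Sum>k\<in>{..<p}. (x k)^2))"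
    using integrable_inverse_sqnorm[OF p, of beta] unfolding normal_vec_eq_PiM_normal_measure sqnorm_def .
  have stein: "integrable ?N (f1 i) \<and> integrable ?N (f2 i) \<and> integral\<^sup>L ?N (f1 i) = integral\<^sup>L ?N (f2 i)"
    if "i < p" for i
  proof -
    define j where "j = (if i = 0 then 1 else 0 :: nat)"
    have I: "finite {..<p}" "i \<in> {..<p}" using that by auto
    have j: "j \<in> {..<p}" "j \<noteq> i" using p by (auto simp: j_def)
    show ?thesis
      using integrable_stein_lhs[OF I inv] integrable_stein_rhs[OF I inv] stein_identity_PiM[OF I j inv]
      unfolding f1_def f2_def normal_vec_eq_PiM_normal_measure sqnorm_def by simp
  qed
  have "integrable ?N (\<lambda>x. \<Sum>i<p. f1 i x)" using stein by auto
  then show "integrable ?N (\<lambda>x. \<Sum>i<p. (x i - beta i) * (x i / sqnorm p x))" unfolding f1_def .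
  have "(\<integral>x. (\<Sum>i<p. f1 i x) \<partial>?N) = (\<Sum>i<p. integral\<^sup>L ?N (f1 i))"
    using stein by (subst Bochner_Integration.integral_sum) auto
  also have "\<dots> = (\<Sum>i<p. integral\<^sup>L ?N (f2 i))" using stein by auto
  also have "\<dots> = (\<integral>x. (\<Sum>i<p. f2 i x) \<partial>?N)"
    using stein by (subst Bochner_Integration.integral_sum) auto
  also have "\<dots> = (real p - 2) * (\<integral>x. 1 / sqnorm p x \<partial>?N)"
    unfolding f2_def sum_stein_divergence by (rule integral_mult_right_zero)
  finally show "(\<integral>x. (\<Sum>i<p. (x i - beta i) * (x i / sqnorm p x)) \<partial>?N)
      = (real p - 2) * (\<integral>x. 1 / sqnorm p x \<partial>?N)" unfolding f1_def .
qed

lemma risk_shrinkage_estimator: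
  assumes p: "p \<ge> 3"
  shows "risk p (\<lambda>x i. (1 - c / sqnorm p x) * x i) beta
       = ennreal (real p - c * (2 * (real p - 2) - c) * (\<integral>x. 1 / sqnorm p x \<partial>normal_vec p beta))"
proof -
  let ?N = "normal_vec p beta"
  define E where "E = (\<integral>x. 1 / sqnorm p x \<partial>?N)"
  define sq where "sq x = (\<Sum>i<p. (x i - beta i)^2)" for x
  define cross where "cross x = (\<Sum>i<p. (x i - beta i) * (x i / sqnorm p x))" for x
  define loss where "loss x = sq x - 2 * c * cross x + c^2 * (1 / sqnorm p x)" for x
  have int_sq: "integrable ?N sq"
    unfolding sq_def by (auto intro: integrable_normal_vec_coordinate_sq)
  have int_cross: "integrable ?N cross"
    unfolding cross_def by (rule integrable_shrinkage_cross_term[OF p])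
  have inv: "integrable ?N (\<lambda>x. 1 / sqnorm p x)" by (rule integrable_inverse_sqnorm[OF p])
  have int_loss_terms: "integrable ?N (\<lambda>x. sq x - 2 * c * cross x)" "integrable ?N (\<lambda>x. c^2 * (1 / sqnorm p x))"
    using int_sq int_cross integrable_mult_right[OF inv] by auto
  have "(\<integral>x. loss x \<partial>?N) = (\<integral>x. sq x - 2 * c * cross x \<partial>?N) + (\<integral>x. c^2 * (1 / sqnorm p x) \<partial>?N)"
    unfolding loss_def using int_loss_terms by (rule Bochner_Integration.integral_add)
  also have "(\<integral>x. sq x - 2 * c * cross x \<partial>?N) = (\<integral>x. sq x \<partial>?N) - 2 * c * (\<integral>x. cross x \<partial>?N)"
    using int_sq int_cross by simp
  also have "(\<integral>x. c^2 * (1 / sqnorm p x) \<partial>?N) = c^2 * E"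
    unfolding E_def by (rule integral_mult_right_zero)
  also have "(\<integral>x. sq x \<partial>?N) = real p"
    unfolding sq_def
    by (subst Bochner_Integration.integral_sum)
      (auto simp: integrable_normal_vec_coordinate_sq integral_normal_vec_coordinate_sq)
  also have "(\<integral>x. cross x \<partial>?N) = (real p - 2) * E"
    unfolding cross_def E_def by (rule integral_shrinkage_cross_term[OF p])
  also have "real p - 2 * c * ((real p - 2) * E) + c^2 * E = real p - c * (2 * (real p - 2) - c) * E"
    by (simp add: power2_eq_square algebra_simps)
  finally have int_loss: "(\<integral>x. loss x \<partial>?N) = real p - c * (2 * (real p - 2) - c) * E" .
  have loss_eq: "loss x = (\<Sum>i<p. ((1 - c / sqnorm p x) * x i - beta i)^2)" for x
    unfolding loss_def sq_def cross_def shrinkage_loss_expand ..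
  have "risk p (\<lambda>x i. (1 - c / sqnorm p x) * x i) beta = (\<integral>\<^sup>+x. ennreal (loss x) \<partial>?N)"
    unfolding risk_def loss_eq ..
  also have "\<dots> = ennreal (\<integral>x. loss x \<partial>?N)"
  proof (rule nn_integral_eq_integral)
    show "integrable ?N loss" unfolding loss_def using int_loss_terms by (rule Bochner_Integration.integrable_add)
    show "AE x in ?N. 0 \<le> loss x" by (intro AE_I2) (simp add: loss_eq sum_nonneg)
  qed
  finally show ?thesis unfolding int_loss E_def .
qed

lemma risk_shrinkage_estimator_p_plus_2_le:
  assumes p: "p \<ge> 6"
  shows "risk p (\<lambda>x i. (1 - (real p + 2) / sqnorm p x) * x i) beta \<le> ennreal (real p)"
proof -
  have "0 \<le> (\<integral>x. 1 / sqnorm p x \<partial>normal_vec p beta)"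
    by (intro integral_nonneg_AE AE_I2) (simp add: sqnorm_def sum_nonneg)
  moreover have "0 \<le> (real p + 2) * (2 * (real p - 2) - (real p + 2))" using p by simp
  ultimately show ?thesis using p by (simp add: risk_shrinkage_estimator ennreal_leI)
qed

section \<open>A lower bound for the maximal risk\<close>

lemma measurable_normal_density [measurable]:
  assumes [measurable]: "f \<in> borel_measurable M" "g \<in> borel_measurable M"
  shows "(\<lambda>x. normal_density (f x) s (g x)) \<in> borel_measurable M"
  unfolding normal_density_def by measurable

lemma nn_integral_normal_density: "s > 0 \<Longrightarrow> (\<integral>\<^sup>+t. ennreal (normal_density m s t) \<partial>lborel) = 1"
  using prob_space.emeasure_space_1[OF prob_space_normal_density[of s m]]
  by (simp add: emeasure_density)

lemma nn_integral_PiM_prod_normal_density: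
  assumes "finite I" and "\<And>i. i \<in> I \<Longrightarrow> s i > 0"
  shows "(\<integral>\<^sup>+x. (\<Prod>i\<in>I. ennreal (normal_density (m i) (s i) (x i))) \<partial>PiM I (\<lambda>_. lborel)) = 1"
proof -
  interpret product_sigma_finite "\<lambda>_::'i. lborel :: real measure"
    unfolding product_sigma_finite_def by (intro allI) (rule lborel.sigma_finite_measure_axioms)
  show ?thesis
    using assms by (subst product_nn_integral_prod) (auto simp: nn_integral_normal_density)
qed

lemma indicator_PiE_eq_prod:
  assumes "finite I" and "x \<in> PiE I (\<lambda>_. UNIV)"
  shows "(indicator (PiE I A) x :: ennreal) = (\<Prod>i\<in>I. indicator (A i) (x i))"
proof (cases "x \<in> PiE I A")
  case False
  then obtain i where "i \<in> I" "x i \<notin> A i" using assms(2) by (auto simp: PiE_iff)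
  then show ?thesis using False assms(1) by (auto intro!: prod_zero[symmetric] bexI[of _ i])
qed (auto simp: indicator_def PiE_iff intro!: prod.neutral)

lemma PiM_normal_density_eq_density:
  fixes I :: "'i set" and m :: "'i \<Rightarrow> real"
  assumes fin: "finite I" and s: "s > 0"
  shows "PiM I (\<lambda>i. density lborel (normal_density (m i) s))
       = density (PiM I (\<lambda>_. lborel)) (\<lambda>x. \<Prod>i\<in>I. ennreal (normal_density (m i) s (x i)))"
proof -
  interpret product_sigma_finite "\<lambda>i. density lborel (normal_density (m i) s)"
    unfolding product_sigma_finite_def
    using prob_space_normal_density[OF s] by (auto intro: prob_space_imp_sigma_finite)
  interpret L: product_sigma_finite "\<lambda>_::'i. lborel :: real measure"
    unfolding product_sigma_finite_def by (intro allI) (rule lborel.sigma_finite_measure_axioms)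
  show ?thesis
  proof (rule PiM_eqI[symmetric, OF fin])
    show "sets (density (PiM I (\<lambda>_. lborel)) (\<lambda>x. \<Prod>i\<in>I. ennreal (normal_density (m i) s (x i))))
        = sets (PiM I (\<lambda>i. density lborel (normal_density (m i) s)))"
      unfolding sets_density by (rule sets_PiM_cong) simp_all
    fix A assume "\<And>i. i \<in> I \<Longrightarrow> A i \<in> sets (density lborel (normal_density (m i) s))"
    then have A: "\<And>i. i \<in> I \<Longrightarrow> A i \<in> sets borel" by simp
    then have "PiE I A \<in> sets (PiM I (\<lambda>_. lborel :: real measure))"
      by (intro sets_PiM_I_finite fin) auto
    then have "emeasure (density (PiM I (\<lambda>_. lborel)) (\<lambda>x. \<Prod>i\<in>I. ennreal (normal_density (m i) s (x i)))) (PiE I A)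
        = (\<integral>\<^sup>+x. (\<Prod>i\<in>I. ennreal (normal_density (m i) s (x i)) * indicator (A i) (x i)) \<partial>PiM I (\<lambda>_. lborel))"
      by (subst emeasure_density)
        (auto intro!: nn_integral_cong simp: indicator_PiE_eq_prod[OF fin] space_PiM prod.distrib)
    also have "\<dots> = (\<Prod>i\<in>I. \<integral>\<^sup>+t. ennreal (normal_density (m i) s t) * indicator (A i) t \<partial>lborel)"
      using A by (subst L.product_nn_integral_prod[OF fin]) auto
    also have "\<dots> = (\<Prod>i\<in>I. emeasure (density lborel (normal_density (m i) s)) (A i))"
      using A by (intro prod.cong refl) (simp add: emeasure_density)
    finally show "emeasure (density (PiM I (\<lambda>_. lborel)) (\<lambda>x. \<Prod>i\<in>I. ennreal (normal_density (m i) s (x i)))) (PiE I A)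
        = (\<Prod>i\<in>I. emeasure (density lborel (normal_density (m i) s)) (A i))" .
  qed
qed

text \<open>Conjugacy: with prior \<open>N(0, \<sigma>\<^sup>2)\<close> and likelihood \<open>N(b, 1)\<close>, the joint density factors into the
  marginal \<open>N(0, 1 + \<sigma>\<^sup>2)\<close> of \<open>y\<close> times the posterior \<open>N(v y, v)\<close> of \<open>b\<close>, \<open>v = \<sigma>\<^sup>2/(1 + \<sigma>\<^sup>2)\<close>.\<close>

lemma normal_prior_times_likelihood:
  fixes \<sigma> b y :: real
  assumes \<sigma>: "\<sigma> > 0"
  defines "v \<equiv> \<sigma>^2 / (1 + \<sigma>^2)"
  shows "normal_density 0 \<sigma> b * normal_density b 1 y
       = normal_density 0 (sqrt (1 + \<sigma>^2)) y * normal_density (v * y) (sqrt v) b"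
proof -
  have q: "1 + \<sigma>^2 > 0" by (simp add: add_pos_nonneg)
  have v: "v > 0" using \<sigma> q by (simp add: v_def)
  have factors: "sqrt (2 * pi * \<sigma>\<^sup>2) * sqrt (2 * pi * 1\<^sup>2)
      = sqrt (2 * pi * (sqrt (1 + \<sigma>^2))\<^sup>2) * sqrt (2 * pi * (sqrt v)\<^sup>2)"
  proof -
    have "(2 * pi * \<sigma>\<^sup>2) * (2 * pi) = (2 * pi * (1 + \<sigma>^2)) * (2 * pi * v)"
      using q by (simp add: v_def field_simps)
    then show ?thesis using q v by (simp add: real_sqrt_mult[symmetric])
  qed
  have exps: "-((b - 0)\<^sup>2) / (2 * \<sigma>\<^sup>2) + -((y - b)\<^sup>2) / (2 * 1\<^sup>2)
     = -((y - 0)\<^sup>2) / (2 * (sqrt (1 + \<sigma>^2))\<^sup>2) + -((b - v * y)\<^sup>2) / (2 * (sqrt v)\<^sup>2)"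
  proof -
    have "b - v * y = ((1 + \<sigma>^2) * b - \<sigma>^2 * y) / (1 + \<sigma>^2)" using q by (simp add: v_def field_simps)
    then show ?thesis using q v \<sigma>
      by (simp add: v_def power_divide divide_simps) (simp add: power2_eq_square algebra_simps)
  qed
  show ?thesis
    unfolding normal_density_def using factors exps by (simp add: exp_add[symmetric] field_simps)
qed

lemma integral_normal_density_sq_dev:
  fixes t m d :: real
  assumes t: "t > 0"
  shows "integrable lborel (\<lambda>b. normal_density m t b * (d - b)^2)"
    and "(\<integral>b. normal_density m t b * (d - b)^2 \<partial>lborel) = t^2 + (d - m)^2"
proof -
  have expand: "normal_density m t b * (d - b)^2 = normal_density m t b * (b - m)^(2*1)
      - 2 * (d - m) * (normal_density m t b * (b - m)^(2*0+1)) + (d - m)^2 * normal_density m t b" for b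
    by (simp add: power2_eq_square algebra_simps)
  have i1: "integrable lborel (\<lambda>b. normal_density m t b * (b - m)^(2*1))"
    and i2: "integrable lborel (\<lambda>b. normal_density m t b * (b - m)^(2*0+1))"
    using integrable_normal_moment[OF t] by blast+
  have i3: "integrable lborel (normal_density m t)" using t by simp
  show "integrable lborel (\<lambda>b. normal_density m t b * (d - b)^2)"
    unfolding expand using i1 i2 i3
    by (intro Bochner_Integration.integrable_add Bochner_Integration.integrable_diff integrable_mult_right)
  have "(\<integral>b. normal_density m t b * (d - b)^2 \<partial>lborel)
     = (\<integral>b. normal_density m t b * (b - m)^(2*1) \<partial>lborel)
       - 2 * (d - m) * (\<integral>b. normal_density m t b * (b - m)^(2*0+1) \<partial>lborel)
       + (d - m)^2 * (\<integral>b. normal_density m t b \<partial>lborel)"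
    unfolding expand using i1 i2 i3
    by (subst Bochner_Integration.integral_add Bochner_Integration.integral_diff integral_mult_right_zero
        | intro Bochner_Integration.integrable_add Bochner_Integration.integrable_diff integrable_mult_right
        | simp)+
  also have "\<dots> = t^2 + (d - m)^2"
    using integral_normal_moment_even[OF t, of m 1] integral_normal_moment_odd[OF t, of m 0] t
    by (simp add: power2_eq_square)
  finally show "(\<integral>b. normal_density m t b * (d - b)^2 \<partial>lborel) = t^2 + (d - m)^2" .
qed

lemma nn_integral_normal_prior_times_likelihood:
  assumes "\<sigma> > 0"
  shows "(\<integral>\<^sup>+b. ennreal (normal_density 0 \<sigma> b * normal_density b 1 y) \<partial>lborel)
       = ennreal (normal_density 0 (sqrt (1 + \<sigma>^2)) y)"
proof -
  define v where "v = \<sigma>^2 / (1 + \<sigma>^2)"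
  have v: "sqrt v > 0" using assms by (simp add: v_def add_pos_nonneg)
  have "(\<integral>\<^sup>+b. ennreal (normal_density 0 \<sigma> b * normal_density b 1 y) \<partial>lborel)
      = (\<integral>\<^sup>+b. ennreal (normal_density 0 (sqrt (1 + \<sigma>^2)) y) * ennreal (normal_density (v * y) (sqrt v) b) \<partial>lborel)"
    using normal_prior_times_likelihood[OF assms] by (simp add: v_def ennreal_mult)
  also have "\<dots> = ennreal (normal_density 0 (sqrt (1 + \<sigma>^2)) y)"
    by (subst nn_integral_cmult) (simp_all add: nn_integral_normal_density[OF v])
  finally show ?thesis .
qed

lemma nn_integral_normal_prior_times_likelihood_sq_loss_ge:
  assumes \<sigma>: "\<sigma> > 0"
  shows "ennreal (normal_density 0 (sqrt (1 + \<sigma>^2)) y * (\<sigma>^2 / (1 + \<sigma>^2)))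
       \<le> (\<integral>\<^sup>+b. ennreal (normal_density 0 \<sigma> b * normal_density b 1 y * (d - b)^2) \<partial>lborel)"
proof -
  define v where "v = \<sigma>^2 / (1 + \<sigma>^2)"
  define c where "c = normal_density 0 (sqrt (1 + \<sigma>^2)) y"
  have v: "v > 0" using \<sigma> by (simp add: v_def add_pos_nonneg)
  have sv: "sqrt v > 0" using v by simp
  have c: "c \<ge> 0" by (simp add: c_def)
  have "ennreal (c * v) \<le> ennreal (c * (v + (d - v * y)^2))"
    using c by (intro ennreal_leI mult_left_mono) auto
  also have "c * (v + (d - v * y)^2) = (\<integral>b. c * (normal_density (v * y) (sqrt v) b * (d - b)^2) \<partial>lborel)"
    using integral_normal_density_sq_dev(2)[OF sv, of "v * y" d] v by simp
  also have "ennreal \<dots> = (\<integral>\<^sup>+b. ennreal (c * (normal_density (v * y) (sqrt v) b * (d - b)^2)) \<partial>lborel)"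
    by (rule nn_integral_eq_integral[symmetric]) (use integral_normal_density_sq_dev(1)[OF sv] c in auto)
  also have "\<dots> = (\<integral>\<^sup>+b. ennreal (normal_density 0 \<sigma> b * normal_density b 1 y * (d - b)^2) \<partial>lborel)"
    using normal_prior_times_likelihood[OF \<sigma>, of _ y] by (simp add: c_def v_def mult.assoc)
  finally show ?thesis by (simp add: c_def v_def)
qed

text \<open>Integrating over \<open>\<beta>\<close> first, the integrand factorises over the coordinates into
  one-dimensional prior-times-likelihood integrals: the marginal density for \<open>j \<noteq> i\<close>, and at least
  the marginal density times the posterior variance for \<open>j = i\<close>.\<close>

lemma bayes_risk_coordinate_ge:
  fixes I :: "'i set" and d :: "('i \<Rightarrow> real) \<Rightarrow> real"
  assumes fin: "finite I" and i: "i \<in> I" and \<sigma>: "\<sigma> > 0"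
    and d [measurable]: "d \<in> borel_measurable (PiM I (\<lambda>_. lborel))"
  shows "ennreal (\<sigma>^2 / (1 + \<sigma>^2))
       \<le> (\<integral>\<^sup>+\<beta>. \<integral>\<^sup>+x. ennreal ((\<Prod>j\<in>I. normal_density 0 \<sigma> (\<beta> j))
              * (\<Prod>j\<in>I. normal_density (\<beta> j) 1 (x j)) * (d x - \<beta> i)^2)
            \<partial>PiM I (\<lambda>_. lborel) \<partial>PiM I (\<lambda>_. lborel))"
proof -
  let ?L = "PiM I (\<lambda>_. lborel :: real measure)"
  interpret L: product_sigma_finite "\<lambda>_::'i. lborel :: real measure"
    unfolding product_sigma_finite_def by (intro allI) (rule lborel.sigma_finite_measure_axioms)
  interpret LL: pair_sigma_finite ?L ?L
    unfolding pair_sigma_finite_def using L.sigma_finite[OF fin] by blast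
  define v where "v = \<sigma>^2 / (1 + \<sigma>^2)"
  define m where "m = normal_density 0 (sqrt (1 + \<sigma>^2))"
  define f where "f x j b = ennreal (normal_density 0 \<sigma> b * normal_density b 1 (x j)
      * (if j = i then (d x - b)^2 else 1))" for x j b
  have integrand: "ennreal ((\<Prod>j\<in>I. normal_density 0 \<sigma> (\<beta> j)) * (\<Prod>j\<in>I. normal_density (\<beta> j) 1 (x j))
      * (d x - \<beta> i)^2) = (\<Prod>j\<in>I. f x j (\<beta> j))" for \<beta> x
    using fin i by (simp add: f_def prod_ennreal prod.distrib)
  have v0: "v \<ge> 0" by (simp add: v_def)
  have factor: "ennreal (m (x j) * (if j = i then v else 1)) \<le> (\<integral>\<^sup>+b. f x j b \<partial>lborel)" for x j
    using nn_integral_normal_prior_times_likelihood_sq_loss_ge[OF \<sigma>, of "x j" "d x"]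
      nn_integral_normal_prior_times_likelihood[OF \<sigma>, of "x j"]
    by (cases "j = i") (simp_all add: f_def m_def v_def)
  have total: "(\<integral>\<^sup>+x. ennreal (\<Prod>j\<in>I. m (x j)) \<partial>?L) = 1"
    using nn_integral_PiM_prod_normal_density[OF fin, of "\<lambda>_. sqrt (1 + \<sigma>^2)" "\<lambda>_. 0"]
    by (simp add: m_def prod_ennreal add_pos_nonneg)
  have "ennreal v = (\<integral>\<^sup>+x. ennreal v * ennreal (\<Prod>j\<in>I. m (x j)) \<partial>?L)"
    using total by (subst nn_integral_cmult) (auto simp: m_def)
  also have "\<dots> = (\<integral>\<^sup>+x. (\<Prod>j\<in>I. ennreal (m (x j) * (if j = i then v else 1))) \<partial>?L)"
    using fin i v0
    by (intro nn_integral_cong) (simp add: m_def prod_ennreal prod.distrib ennreal_mult'[OF v0, symmetric] mult.commute)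
  also have "\<dots> \<le> (\<integral>\<^sup>+x. (\<Prod>j\<in>I. \<integral>\<^sup>+b. f x j b \<partial>lborel) \<partial>?L)"
    by (intro nn_integral_mono prod_mono_ennreal factor)
  also have "\<dots> = (\<integral>\<^sup>+x. \<integral>\<^sup>+\<beta>. (\<Prod>j\<in>I. f x j (\<beta> j)) \<partial>?L \<partial>?L)"
    by (intro nn_integral_cong L.product_nn_integral_prod[OF fin, symmetric]) (simp add: f_def)
  also have "\<dots> = (\<integral>\<^sup>+\<beta>. \<integral>\<^sup>+x. (\<Prod>j\<in>I. f x j (\<beta> j)) \<partial>?L \<partial>?L)"
    by (rule LL.Fubini'[symmetric]) (simp add: f_def)
  finally show ?thesis by (simp add: integrand v_def)
qed

lemma measurable_estimator_component:
  assumes "estimator p delta" "i < p"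
  shows "(\<lambda>x. delta x i) \<in> borel_measurable (PiM {..<p} (\<lambda>_. lborel))"
proof -
  have sets: "sets (PiM {..<p} (\<lambda>_. lborel :: real measure)) = sets (PiM {..<p} (\<lambda>_. borel :: real measure))"
    by (rule sets_PiM_cong) simp_all
  have "(\<lambda>x. delta x i) \<in> borel_measurable (PiM {..<p} (\<lambda>_. borel))"
    using assms by (simp add: estimator_def)
  then show ?thesis unfolding measurable_cong_sets[OF sets refl] .
qed

lemma
  fixes delta :: "(nat \<Rightarrow> real) \<Rightarrow> nat \<Rightarrow> real"
  assumes est: "estimator p delta"
  shows risk_eq_nn_integral_lborel: "risk p delta \<beta>
      = (\<integral>\<^sup>+x. ennreal ((\<Prod>j<p. normal_density (\<beta> j) 1 (x j)) * (\<Sum>i<p. (delta x i - \<beta> i)^2))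
          \<partial>PiM {..<p} (\<lambda>_. lborel))"
    and borel_measurable_risk: "(\<lambda>\<beta>. risk p delta \<beta>) \<in> borel_measurable (PiM {..<p} (\<lambda>_. lborel))"
proof -
  let ?L = "PiM {..<p} (\<lambda>_. lborel :: real measure)"
  interpret L: product_sigma_finite "\<lambda>_::nat. lborel :: real measure"
    unfolding product_sigma_finite_def by (intro allI) (rule lborel.sigma_finite_measure_axioms)
  have [measurable]: "(\<lambda>x. delta x i) \<in> borel_measurable ?L" if "i < p" for i
    using measurable_estimator_component[OF est that] .
  have loss_meas: "(\<lambda>(\<beta>, x). \<Sum>i<p. (delta x i - \<beta> i)^2) \<in> borel_measurable (?L \<Otimes>\<^sub>M ?L)"
  proof -
    have "(\<lambda>z. \<Sum>i<p. (delta (snd z) i - fst z i)^2) \<in> borel_measurable (?L \<Otimes>\<^sub>M ?L)"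
      by (intro borel_measurable_sum) measurable
    then show ?thesis by (simp add: case_prod_beta')
  qed
  have "risk p delta \<beta> = (\<integral>\<^sup>+x. (\<Prod>j<p. ennreal (normal_density (\<beta> j) 1 (x j)))
      * ennreal (\<Sum>i<p. (delta x i - \<beta> i)^2) \<partial>?L)" for \<beta>
    unfolding risk_def normal_vec_def PiM_normal_density_eq_density[OF finite_lessThan zero_less_one]
    by (rule nn_integral_density) (use loss_meas in measurable)
  then show risk_eq: "risk p delta \<beta> = (\<integral>\<^sup>+x. ennreal ((\<Prod>j<p. normal_density (\<beta> j) 1 (x j))
      * (\<Sum>i<p. (delta x i - \<beta> i)^2)) \<partial>?L)" for \<beta>
    by (simp add: prod_ennreal ennreal_mult prod_nonneg sum_nonneg)
  show "(\<lambda>\<beta>. risk p delta \<beta>) \<in> borel_measurable ?L"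
    unfolding risk_eq
    by (rule sigma_finite_measure.borel_measurable_nn_integral[OF L.sigma_finite]) (use loss_meas in measurable)
qed

lemma bayes_risk_normal_prior_ge:
  fixes delta :: "(nat \<Rightarrow> real) \<Rightarrow> nat \<Rightarrow> real"
  assumes est: "estimator p delta" and \<sigma>: "\<sigma> > 0"
  shows "ennreal (real p * (\<sigma>^2 / (1 + \<sigma>^2)))
       \<le> (\<integral>\<^sup>+\<beta>. risk p delta \<beta> \<partial>PiM {..<p} (\<lambda>_. density lborel (normal_density 0 \<sigma>)))"
proof -
  let ?L = "PiM {..<p} (\<lambda>_. lborel :: real measure)"
  interpret L: product_sigma_finite "\<lambda>_::nat. lborel :: real measure"
    unfolding product_sigma_finite_def by (intro allI) (rule lborel.sigma_finite_measure_axioms)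
  have sf: "sigma_finite_measure ?L" by (rule L.sigma_finite) simp
  have [measurable]: "(\<lambda>x. delta x i) \<in> borel_measurable ?L" if "i < p" for i
    using measurable_estimator_component[OF est that] .
  define \<Psi> where "\<Psi> \<beta> = (\<Prod>j<p. normal_density 0 \<sigma> (\<beta> j))" for \<beta> :: "nat \<Rightarrow> real"
  define \<Phi> where "\<Phi> \<beta> x = (\<Prod>j<p. normal_density (\<beta> j) 1 (x j))" for \<beta> x :: "nat \<Rightarrow> real"
  define R where "R i \<beta> = (\<integral>\<^sup>+x. ennreal (\<Psi> \<beta> * \<Phi> \<beta> x * (delta x i - \<beta> i)^2) \<partial>?L)" for i \<beta>
  have \<Psi>0: "\<Psi> \<beta> \<ge> 0" and \<Phi>0: "\<Phi> \<beta> x \<ge> 0" for \<beta> x by (simp_all add: \<Psi>_def \<Phi>_def prod_nonneg)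
  have weighted: "ennreal (\<Psi> \<beta>) * risk p delta \<beta> = (\<Sum>i<p. R i \<beta>)" for \<beta>
  proof -
    have "ennreal (\<Psi> \<beta>) * risk p delta \<beta>
        = (\<integral>\<^sup>+x. ennreal (\<Psi> \<beta> * (\<Phi> \<beta> x * (\<Sum>i<p. (delta x i - \<beta> i)^2))) \<partial>?L)"
      unfolding risk_eq_nn_integral_lborel[OF est] \<Phi>_def[symmetric] using \<Psi>0 \<Phi>0
      by (subst nn_integral_cmult[symmetric]) (auto simp: \<Phi>_def ennreal_mult sum_nonneg)
    also have "\<dots> = (\<integral>\<^sup>+x. (\<Sum>i<p. ennreal (\<Psi> \<beta> * \<Phi> \<beta> x * (delta x i - \<beta> i)^2)) \<partial>?L)"
      using \<Psi>0 \<Phi>0 by (intro nn_integral_cong) (simp add: sum_distrib_left mult.assoc)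
    also have "\<dots> = (\<Sum>i<p. R i \<beta>)"
      unfolding R_def by (rule nn_integral_sum) (auto simp: \<Psi>_def \<Phi>_def)
    finally show ?thesis .
  qed
  have "ennreal (real p * (\<sigma>^2 / (1 + \<sigma>^2))) = (\<Sum>i<p. ennreal (\<sigma>^2 / (1 + \<sigma>^2)))"
    by (subst sum_ennreal) (simp_all add: add_pos_nonneg)
  also have "\<dots> \<le> (\<Sum>i<p. \<integral>\<^sup>+\<beta>. R i \<beta> \<partial>?L)"
    unfolding R_def \<Psi>_def \<Phi>_def
    by (intro sum_mono bayes_risk_coordinate_ge) (simp_all add: \<sigma>)
  also have "\<dots> = (\<integral>\<^sup>+\<beta>. (\<Sum>i<p. R i \<beta>) \<partial>?L)"
    unfolding R_def \<Psi>_def \<Phi>_def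
    by (rule nn_integral_sum[symmetric]) (auto intro!: sigma_finite_measure.borel_measurable_nn_integral[OF sf])
  also have "\<dots> = (\<integral>\<^sup>+\<beta>. (\<Prod>j<p. ennreal (normal_density 0 \<sigma> (\<beta> j))) * risk p delta \<beta> \<partial>?L)"
    by (intro nn_integral_cong) (simp add: weighted[symmetric] \<Psi>_def prod_ennreal)
  also have "\<dots> = (\<integral>\<^sup>+\<beta>. risk p delta \<beta> \<partial>PiM {..<p} (\<lambda>_. density lborel (normal_density 0 \<sigma>)))"
    using PiM_normal_density_eq_density[OF finite_lessThan \<sigma>, where m = "\<lambda>_. 0"] borel_measurable_risk[OF est]
    by (simp add: nn_integral_density)
  finally show ?thesis .
qed

lemma sup_risk_ge:
  assumes "estimator p delta"
  shows "ennreal (real p) \<le> (SUP beta. risk p delta beta)"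
proof -
  have bound: "ennreal (real p * (\<sigma>^2 / (1 + \<sigma>^2))) \<le> (SUP beta. risk p delta beta)" if "\<sigma> > 0" for \<sigma>
  proof -
    let ?P = "PiM {..<p} (\<lambda>_. density lborel (normal_density 0 \<sigma>))"
    interpret P: prob_space ?P
      by (rule prob_space_PiM) (rule prob_space_normal_density[OF that])
    have "ennreal (real p * (\<sigma>^2 / (1 + \<sigma>^2))) \<le> (\<integral>\<^sup>+\<beta>. risk p delta \<beta> \<partial>?P)"
      by (rule bayes_risk_normal_prior_ge[OF assms that])
    also have "\<dots> \<le> (\<integral>\<^sup>+\<beta>. (SUP beta. risk p delta beta) \<partial>?P)"
      by (intro nn_integral_mono SUP_upper) simp
    finally show ?thesis by (simp add: P.emeasure_space_1)
  qed
  have "(\<lambda>n. ennreal (real p * (real n^2 / (1 + real n^2)))) \<longlonglongrightarrow> ennreal (real p)"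
    by (intro tendsto_ennrealI) real_asymp
  then show ?thesis
    by (rule LIMSEQ_le_const2) (use bound in \<open>auto intro!: exI[of _ 1]\<close>)
qed

lemma estimator_shrinkage: "estimator p (\<lambda>x i. (1 - c / sqnorm p x) * x i)"
  unfolding estimator_def sqnorm_def by (auto intro!: measurable_compose)

lemma minimax_if_risk_le:
  assumes "estimator p delta" and "\<And>beta. risk p delta beta \<le> ennreal (real p)"
  shows "minimax p delta"
  unfolding minimax_def
proof (intro conjI allI impI)
  fix delta' assume "estimator p delta'"
  have "(SUP beta. risk p delta beta) \<le> ennreal (real p)" by (rule SUP_least) (rule assms(2))
  also have "\<dots> \<le> (SUP beta. risk p delta' beta)" by (rule sup_risk_ge) fact
  finally show "(SUP beta. risk p delta beta) \<le> (SUP beta. risk p delta' beta)" .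
qed (rule assms(1))

theorem mainTheorem7:
  fixes p :: nat and y :: "nat \<Rightarrow> real"
  assumes "p \<ge> 1"
    and "sqnorm p y > real p + 2"
  shows "(let s = sqnorm p y; k = (real p + 2) / s; tau2 = (1 - k) / k
          in em_map p s tau2 = tau2)
     \<and> (p \<ge> 6 \<longrightarrow>
          (let bhat = (\<lambda>x i. (1 - (real p + 2) / sqnorm p x) * x i)
           in minimax p bhat \<and> (\<forall>beta. risk p bhat beta \<le> risk p (\<lambda>x. x) beta)))"
proof (intro conjI impI)
  show "let s = sqnorm p y; k = (real p + 2) / s; tau2 = (1 - k) / k in em_map p s tau2 = tau2"
    using em_map_fixed_point[OF assms(2)] by (simp add: Let_def)
  assume "p \<ge> 6"
  then have "risk p (\<lambda>x i. (1 - (real p + 2) / sqnorm p x) * x i) beta \<le> ennreal (real p)" for beta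
    by (rule risk_shrinkage_estimator_p_plus_2_le)
  then show "let bhat = (\<lambda>x i. (1 - (real p + 2) / sqnorm p x) * x i)
      in minimax p bhat \<and> (\<forall>beta. risk p bhat beta \<le> risk p (\<lambda>x. x) beta)"
    by (simp add: Let_def minimax_if_risk_le estimator_shrinkage risk_identity_estimator)
qed

end
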